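(* Let there be $n$ risk-neutral agents with independent private valuations drawn from a common distribution and private signals $s_i$. Consider two mechanisms $\bar M$ and $\bar M'$, each constructed as follows. - Each is built from a family of direct mechanisms $M_1,\dots,M_n$ (respectively $M'_1,\dots,M'_n$). - Each such direct mechanism allocates the good to the highest message. - In the $i$-th mechanism of the family, all agents are subject to agent $i$'s transfer rule and all receive signal $s_i$, and truthful revelation is a symmetric equilibrium. - The mechanism $\bar M$ (respectively $\bar M'$) allocates the good to the highest message, with ties broken arbitrarily, and charges each agent $j$ the transfer function of the $j$-th mechanism of its family. Suppose $\bar M$ and $\bar M'$ implement the same transfer function for agent $i$. Then, in the truthful equilibria of $\bar M$ and $\bar M'$, agent $i$'s expected utility is the same in both mechanisms.
   Context: Truthful revelation means each agent reports his valuation. An agent who receives the good with valuation $v$ and pays $t$ gets $v-t$; otherwise he gets $-t$. *)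

theory Defs
  imports "HOL-Probability.Probability" "HOL-Combinatorics.Transposition"
begin

text \<open>Agents are 0,...,n-1. A (valuation or message) profile is a function nat => real;
  only the entries below n matter. Valuations are i.i.d. with common law D.\<close>

definition profiles :: "nat \<Rightarrow> real measure \<Rightarrow> (nat \<Rightarrow> real) measure" where
  "profiles n D = PiM {..<n} (\<lambda>_. D)"

text \<open>An allocation rule q: q m j is the probability that agent j gets the good at message
  profile m. It allocates to the highest message, ties broken arbitrarily.\<close>

definition highest_alloc :: "nat \<Rightarrow> ((nat \<Rightarrow> real) \<Rightarrow> nat \<Rightarrow> real) \<Rightarrow> bool" where
  "highest_alloc n q \<longleftrightarrow>
     (\<forall>m. (\<forall>j<n. 0 \<le> q m j \<and> ((\<exists>k<n. m j < m k) \<longrightarrow> q m j = 0)) \<and> (\<Sum>j<n. q m j) = 1)"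

definition mech_measurable :: "nat \<Rightarrow> ((nat \<Rightarrow> real) \<Rightarrow> nat \<Rightarrow> real)
    \<Rightarrow> (nat \<Rightarrow> (nat \<Rightarrow> real) \<Rightarrow> real) \<Rightarrow> bool" where
  "mech_measurable n q t \<longleftrightarrow>
     (\<forall>j<n. (\<lambda>m. q m j) \<in> borel_measurable (PiM {..<n} (\<lambda>_. borel))
          \<and> t j \<in> borel_measurable (PiM {..<n} (\<lambda>_. borel)))"

definition util :: "((nat \<Rightarrow> real) \<Rightarrow> nat \<Rightarrow> real) \<Rightarrow> (nat \<Rightarrow> (nat \<Rightarrow> real) \<Rightarrow> real)
    \<Rightarrow> (nat \<Rightarrow> real) \<Rightarrow> (nat \<Rightarrow> real) \<Rightarrow> nat \<Rightarrow> real" where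
  "util q t v m j = v j * q m j - t j m"

text \<open>Truthful reporting is a symmetric strategy profile.\<close>

definition truthful_eq :: "nat \<Rightarrow> real measure \<Rightarrow> ((nat \<Rightarrow> real) \<Rightarrow> nat \<Rightarrow> real)
    \<Rightarrow> (nat \<Rightarrow> (nat \<Rightarrow> real) \<Rightarrow> real) \<Rightarrow> (nat \<Rightarrow> (nat \<Rightarrow> real) \<Rightarrow> 'b::topological_space) \<Rightarrow> bool" where
  "truthful_eq n D q t sig \<longleftrightarrow>
     (\<forall>j<n. \<forall>dev :: real \<Rightarrow> 'b \<Rightarrow> real.
        (\<lambda>(x, y). dev x y) \<in> borel_measurable (borel \<Otimes>\<^sub>M borel) \<longrightarrow>
        (\<integral>v. util q t v (v(j := dev (v j) (sig j v))) j \<partial>profiles n D)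
          \<le> (\<integral>v. util q t v v j \<partial>profiles n D))"

text \<open>The i-th mechanism of a family: every agent j is subject to agent i's transfer rule
  and receives signal s_i, i.e. j is put in the position of agent i.\<close>

definition family_transfer :: "nat \<Rightarrow> (nat \<Rightarrow> (nat \<Rightarrow> real) \<Rightarrow> real) \<Rightarrow> nat \<Rightarrow> (nat \<Rightarrow> real) \<Rightarrow> real" where
  "family_transfer i t j m = t i (m \<circ> Transposition.transpose i j)"

definition family_signal :: "nat \<Rightarrow> (nat \<Rightarrow> (nat \<Rightarrow> real) \<Rightarrow> 'b) \<Rightarrow> nat \<Rightarrow> (nat \<Rightarrow> real) \<Rightarrow> 'b" where
  "family_signal i s j v = s i (v \<circ> Transposition.transpose i j)"

end

theory Submission
  imports Defs
begin

text \<open>Both mechanisms allocate to the highest message, and under an atomless valuation law ties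
  occur with probability zero, so the two allocation rules give agent i the good on the same
  event up to a null set. Since agent i also pays the same transfer in both, his truthful
  utilities agree almost surely.\<close>

lemma highest_alloc_no_tie:
  assumes q: "highest_alloc n q" and i: "i < n"
    and no_tie: "\<forall>k<n. k \<noteq> i \<longrightarrow> m k \<noteq> m i"
  shows "q m i = (if \<exists>k<n. m i < m k then 0 else 1)"
proof (cases "\<exists>k<n. m i < m k")
  case True
  then show ?thesis using q i unfolding highest_alloc_def by auto
next
  case False
  then have "\<forall>k<n. k \<noteq> i \<longrightarrow> m k < m i" using no_tie by force
  then have others_zero: "\<forall>k\<in>{..<n} - {i}. q m k = 0" using q i unfolding highest_alloc_def by auto
  have "1 = (\<Sum>k<n. q m k)" using q unfolding highest_alloc_def by auto
  also have "\<dots> = q m i + (\<Sum>k\<in>{..<n} - {i}. q m k)" using i by (subst sum.remove[of _ i]) auto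
  also have "\<dots> = q m i" using others_zero by simp
  finally show ?thesis using False by simp
qed

lemma AE_PiM_neq_coordinates:
  fixes D :: "real measure"
  assumes D: "sigma_finite_measure D" "sets D = sets borel" "\<And>x. emeasure D {x} = 0"
    and J: "finite J" "i \<in> J" "k \<in> J" "k \<noteq> i"
  shows "AE v in PiM J (\<lambda>_. D). v k \<noteq> v i"
proof -
  interpret product_sigma_finite "\<lambda>_. D"
    using D(1) by (simp add: product_sigma_finite_def)
  let ?N = "{v \<in> space (PiM J (\<lambda>_. D)). v k = v i}"
  have coord_measurable: "(\<lambda>v. v j) \<in> borel_measurable (PiM J (\<lambda>_. D))" if "j \<in> J" for j
    using measurable_component_singleton[OF that, of "\<lambda>_. D"] measurable_cong_sets[OF refl D(2)]
    by blast
  have N: "?N \<in> sets (PiM J (\<lambda>_. D))"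
    using J by (intro measurable_equality_set coord_measurable)
  have J_eq: "J = insert i (J - {i})" using J(2) by blast
  have "emeasure (PiM J (\<lambda>_. D)) ?N = (\<integral>\<^sup>+ v. indicator ?N v \<partial>PiM (insert i (J - {i})) (\<lambda>_. D))"
    using N J_eq by simp
  also have "\<dots> = (\<integral>\<^sup>+ x. (\<integral>\<^sup>+ y. indicator ?N (x(i := y)) \<partial>D) \<partial>PiM (J - {i}) (\<lambda>_. D))"
    using N J_eq J(1) by (subst product_nn_integral_insert) auto
  also have "\<dots> = (\<integral>\<^sup>+ x. 0 \<partial>PiM (J - {i}) (\<lambda>_. D))"
  proof (rule nn_integral_cong)
    fix x
    have "(\<integral>\<^sup>+ y. indicator ?N (x(i := y)) \<partial>D) \<le> (\<integral>\<^sup>+ y. indicator {x k} y \<partial>D)"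
      using J(4) by (intro nn_integral_mono) (auto simp: indicator_def)
    also have "\<dots> = 0"
      using D(2,3) by (subst nn_integral_indicator) auto
    finally show "(\<integral>\<^sup>+ y. indicator ?N (x(i := y)) \<partial>D) = 0" by simp
  qed
  finally have "?N \<in> null_sets (PiM J (\<lambda>_. D))" using N by (auto intro: null_setsI)
  then show ?thesis by (rule AE_I') auto
qed

lemma AE_highest_alloc_eq:
  fixes D :: "real measure"
  assumes D: "prob_space D" "sets D = sets borel" "\<forall>x. emeasure D {x} = 0"
    and i: "i < n" and q: "highest_alloc n q" and q': "highest_alloc n q'"
  shows "AE v in profiles n D. q v i = q' v i"
proof -
  have "AE v in profiles n D. \<forall>k\<in>{..<n} - {i}. v k \<noteq> v i"
    unfolding profiles_def using D i
    by (intro AE_finite_allI AE_PiM_neq_coordinates) (auto intro: prob_space_imp_sigma_finite)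
  then show ?thesis
    by eventually_elim (simp add: highest_alloc_no_tie[OF q i] highest_alloc_no_tie[OF q' i])
qed

lemma truthful_util_measurable:
  fixes D :: "real measure"
  assumes "sets D = sets borel" and "mech_measurable n q t" and "i < n"
  shows "(\<lambda>v. util q t v v i) \<in> borel_measurable (profiles n D)"
proof -
  have "(\<lambda>v. q v i) \<in> borel_measurable (PiM {..<n} (\<lambda>_. borel))"
    and "t i \<in> borel_measurable (PiM {..<n} (\<lambda>_. borel))"
    using assms(2,3) unfolding mech_measurable_def by auto
  then have "(\<lambda>v. util q t v v i) \<in> borel_measurable (PiM {..<n} (\<lambda>_. borel))"
    unfolding util_def using assms(3)
    by (intro borel_measurable_diff borel_measurable_times) auto
  moreover have "sets (profiles n D) = sets (PiM {..<n} (\<lambda>_. borel))"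
    unfolding profiles_def using assms(1) by (intro sets_PiM_cong) auto
  ultimately show ?thesis using measurable_cong_sets by blast
qed

theorem corollary1:
  fixes n i :: nat and D :: "real measure"
    and t t' :: "nat \<Rightarrow> (nat \<Rightarrow> real) \<Rightarrow> real"
    and s s' :: "nat \<Rightarrow> (nat \<Rightarrow> real) \<Rightarrow> 'b::topological_space"
    and qf qf' :: "nat \<Rightarrow> (nat \<Rightarrow> real) \<Rightarrow> nat \<Rightarrow> real"
    and qb qb' :: "(nat \<Rightarrow> real) \<Rightarrow> nat \<Rightarrow> real"
  assumes D: "prob_space D" "sets D = sets borel" "\<forall>x. emeasure D {x} = 0"
    and i: "i < n"
    and sig: "\<forall>k<n. s k \<in> borel_measurable (profiles n D) \<and> s' k \<in> borel_measurable (profiles n D)"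
    and fam: "\<forall>k<n. highest_alloc n (qf k) \<and> mech_measurable n (qf k) (family_transfer k t)
                   \<and> truthful_eq n D (qf k) (family_transfer k t) (family_signal k s)"
    and fam': "\<forall>k<n. highest_alloc n (qf' k) \<and> mech_measurable n (qf' k) (family_transfer k t')
                   \<and> truthful_eq n D (qf' k) (family_transfer k t') (family_signal k s')"
    and bar: "highest_alloc n qb" "mech_measurable n qb t"
    and bar': "highest_alloc n qb'" "mech_measurable n qb' t'"
    and same: "t i = t' i"
  shows "(\<integral>v. util qb t v v i \<partial>profiles n D) = (\<integral>v. util qb' t' v v i \<partial>profiles n D)"
  proof (rule integral_cong_AE)
  show "(\<lambda>v. util qb t v v i) \<in> borel_measurable (profiles n D)"
    using truthful_util_measurable[OF D(2) bar(2) i] .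
  show "(\<lambda>v. util qb' t' v v i) \<in> borel_measurable (profiles n D)"
    using truthful_util_measurable[OF D(2) bar'(2) i] .
  show "AE v in profiles n D. util qb t v v i = util qb' t' v v i"
    using AE_highest_alloc_eq[OF D i bar(1) bar'(1)]
    by eventually_elim (simp add: util_def same)
qed

end
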